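(* For each $h\in\{1,2\}$, let $\mathrm{bd}_h\in\mathbb{BD}^{\mathbb{Z}}_n$ be a non-empty integer BD shape represented by the closed integer graph $G_h=(\mathcal{N},w_h)$, and let $R_h$ be a subgraph of $G_h$ such that $\mathrm{closure}(R_h)=G_h$. Let $G_1\sqcup G_2=(\mathcal{N},w)$. Then $\mathrm{bd}_1\uplus\mathrm{bd}_2\neq\mathrm{bd}_1\cup\mathrm{bd}_2$ if and only if there exist an arc $(i,j)$ of $R_1$ and an arc $(k,\ell)$ of $R_2$ such that (1) $w_1(i,j)<w_2(i,j)$ and $w_2(k,\ell)<w_1(k,\ell)$; and (2) $w_1(i,j)+w_2(k,\ell)+2\le w(i,\ell)+w(k,j)$.
   Context: Let $\mathcal{N}=\{0,1,\dots,n\}$. An integer graph is a pair $(\mathcal{N},w)$ with $w:\mathcal{N}\times\mathcal{N}\to\mathbb{Z}\cup\{+\infty\}$ (with $d<+\infty$, $d+(+\infty)=+\infty$); $(i,j)$ is an arc if $w(i,j)<+\infty$. A path $n_0\cdots n_p$ has weight $\sum_t w(n_{t-1},n_t)$; the graph is consistent if no cycle has negative weight. Graphs are ordered by $G\unlhd G'$ iff $w\le w'$ pointwise. A consistent graph is closed if $w(i,i)=0$ and $w(i,j)\le w(i,k)+w(k,j)$ for all $i,j,k$. $\mathrm{closure}(G)$ is the pointwise maximum of all closed graphs $G^c\unlhd G$. $R$ is a subgraph of $G$ if every arc of $R$ is an arc of $G$ with the same weight. An integer BD shape is a set $\{\mathbf{x}\in\mathbb{Z}^n : \text{finitely many constraints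 } \pm x_i\le b,\ x_i-x_j\le b\}$ with $b\in\mathbb{Z}$; $\mathbb{BD}^{\mathbb{Z}}_n$ is the set of them. A consistent integer graph $G=(\mathcal{N},w)$ represents $\{\mathbf{x}\in\mathbb{Z}^n : x_i-x_j\le w(i,j)\ \forall i,j\in\mathcal{N}\}$ with $x_0:=0$. $G_1\sqcup G_2=(\mathcal{N},w)$ with $w(i,j)=\max(w_1(i,j),w_2(i,j))$. $\mathrm{bd}_1\uplus\mathrm{bd}_2$ is the least integer BD shape containing $\mathrm{bd}_1\cup\mathrm{bd}_2$, represented by $G_1\sqcup G_2$. *)

theory Defs
  imports Complex_Main "HOL-Library.Extended_Real"
begin

text \<open>An integer graph is a weight function on nodes with values in
  Z \<union> {+\<infinity>}, modelled as an ereal-valued function whose entries on N are integers or \<infinity>.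
  Entries outside N are irrelevant.\<close>

type_synonym graph = "nat \<Rightarrow> nat \<Rightarrow> ereal"

definition int_graph :: "nat \<Rightarrow> graph \<Rightarrow> bool" where
  "int_graph n w \<longleftrightarrow> (\<forall>i\<le>n. \<forall>j\<le>n. w i j = \<infinity> \<or> (\<exists>z::int. w i j = ereal (of_int z)))"

definition is_arc :: "nat \<Rightarrow> graph \<Rightarrow> nat \<Rightarrow> nat \<Rightarrow> bool" where
  "is_arc n w i j \<longleftrightarrow> i \<le> n \<and> j \<le> n \<and> w i j < \<infinity>"

fun path_weight :: "graph \<Rightarrow> nat list \<Rightarrow> ereal" where
  "path_weight w [] = 0"
| "path_weight w [a] = 0"
| "path_weight w (a # b # rest) = w a b + path_weight w (b # rest)"

definition is_cycle :: "nat \<Rightarrow> nat list \<Rightarrow> bool" where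
  "is_cycle n ns \<longleftrightarrow> length ns \<ge> 2 \<and> hd ns = last ns \<and> (\<forall>v\<in>set ns. v \<le> n)"

definition consistent :: "nat \<Rightarrow> graph \<Rightarrow> bool" where
  "consistent n w \<longleftrightarrow> int_graph n w \<and> (\<forall>ns. is_cycle n ns \<longrightarrow> path_weight w ns \<ge> 0)"

definition graph_le :: "nat \<Rightarrow> graph \<Rightarrow> graph \<Rightarrow> bool" where
  "graph_le n w w' \<longleftrightarrow> (\<forall>i\<le>n. \<forall>j\<le>n. w i j \<le> w' i j)"

definition closed_graph :: "nat \<Rightarrow> graph \<Rightarrow> bool" where
  "closed_graph n w \<longleftrightarrow> consistent n w \<and> (\<forall>i\<le>n. w i i = 0) \<and>
     (\<forall>i\<le>n. \<forall>j\<le>n. \<forall>k\<le>n. w i j \<le> w i k + w k j)"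

definition graph_closure :: "nat \<Rightarrow> graph \<Rightarrow> graph" where
  "graph_closure n w i j = (SUP c \<in> {c. int_graph n c \<and> closed_graph n c \<and> graph_le n c w}. c i j)"

definition graph_eq :: "nat \<Rightarrow> graph \<Rightarrow> graph \<Rightarrow> bool" where
  "graph_eq n w w' \<longleftrightarrow> (\<forall>i\<le>n. \<forall>j\<le>n. w i j = w' i j)"

definition subgraph :: "nat \<Rightarrow> graph \<Rightarrow> graph \<Rightarrow> bool" where
  "subgraph n r w \<longleftrightarrow> (\<forall>i\<le>n. \<forall>j\<le>n. is_arc n r i j \<longrightarrow> is_arc n w i j \<and> r i j = w i j)"

definition graph_join :: "graph \<Rightarrow> graph \<Rightarrow> graph" where
  "graph_join w1 w2 i j = max (w1 i j) (w2 i j)"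

text \<open>Points of Z^n: functions x with x 0 = 0 (the auxiliary variable x_0) and
  x k = 0 for k > n; coordinates x_1..x_n.\<close>
definition points :: "nat \<Rightarrow> (nat \<Rightarrow> int) set" where
  "points n = {x. x 0 = 0 \<and> (\<forall>k>n. x k = 0)}"

definition gamma :: "nat \<Rightarrow> graph \<Rightarrow> (nat \<Rightarrow> int) set" where
  "gamma n w = {x \<in> points n. \<forall>i\<le>n. \<forall>j\<le>n. ereal (of_int (x i - x j)) \<le> w i j}"

text \<open>Integer BD shapes: sets defined by finitely many constraints x_i - x_j \<le> b
  (i, j \<in> N, with x_0 = 0, which covers \<plusminus>x_i \<le> b), b integer.\<close>
definition BD_Z :: "nat \<Rightarrow> (nat \<Rightarrow> int) set set" where
  "BD_Z n = {S. \<exists>C :: (nat \<times> nat \<times> int) set. finite C \<and> (\<forall>(i,j,b)\<in>C. i \<le> n \<and> j \<le> n) \<and>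
      S = {x \<in> points n. \<forall>(i,j,b)\<in>C. x i - x j \<le> b}}"

definition bd_hull_union :: "nat \<Rightarrow> (nat \<Rightarrow> int) set \<Rightarrow> (nat \<Rightarrow> int) set \<Rightarrow> (nat \<Rightarrow> int) set" where
  "bd_hull_union n S1 S2 = \<Inter> {S \<in> BD_Z n. S1 \<union> S2 \<subseteq> S}"

end

theory Submission
  imports Defs
begin

text \<open>Closed integer graphs are tight: every finite entry \<open>w(i,j)\<close> is attained as \<open>x\<^sub>i - x\<^sub>j\<close>
  by an integer point, because adding the reverse constraint \<open>x\<^sub>j - x\<^sub>i \<le> -c\<close> with
  \<open>c \<le> w(i,j)\<close> and closing incrementally keeps the graph closed, and a closed graph has a
  point (its row minima). Hence every constraint of the join \<open>W = G\<^sub>1 \<squnion> G\<^sub>2\<close> is attained in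
  \<open>bd\<^sub>1 \<union> bd\<^sub>2\<close>, so \<open>W\<close> represents the hull, and the hull differs from the union iff some
  point of \<open>W\<close> violates both \<open>G\<^sub>1\<close> and \<open>G\<^sub>2\<close>. As \<open>G\<^sub>h = closure(R\<^sub>h)\<close>, such a point
  violates an arc \<open>(i,j)\<close> of \<open>R\<^sub>1\<close> and an arc \<open>(k,l)\<close> of \<open>R\<^sub>2\<close>; integrality turns the two
  strict violations into \<open>x\<^sub>i - x\<^sub>j + x\<^sub>k - x\<^sub>l \<ge> w\<^sub>1(i,j) + w\<^sub>2(k,l) + 2\<close>, and regrouping the
  left side as \<open>(x\<^sub>i - x\<^sub>l) + (x\<^sub>k - x\<^sub>j)\<close> gives condition (2). Conversely, under (1) and (2)
  the two tightenings of \<open>W\<close> by \<open>x\<^sub>i - x\<^sub>j \<ge> w\<^sub>1(i,j) + 1\<close> and \<open>x\<^sub>k - x\<^sub>l \<ge> w\<^sub>2(k,l) + 1\<close>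
  remain closed, and any of their points lies in the hull but in neither shape.\<close>

definition int_or_inf :: "ereal \<Rightarrow> bool" where
  "int_or_inf v \<longleftrightarrow> v = \<infinity> \<or> (\<exists>z::int. v = ereal (of_int z))"

lemma int_graph_iff: "int_graph n w \<longleftrightarrow> (\<forall>i\<le>n. \<forall>j\<le>n. int_or_inf (w i j))"
  unfolding int_graph_def int_or_inf_def ..

lemma int_or_inf_cases [consumes 1, case_names infinite finite]:
  assumes "int_or_inf v"
  obtains "v = \<infinity>" | z where "v = ereal (of_int z)"
  using assms unfolding int_or_inf_def by blast

lemma int_or_inf_of_int [simp]: "int_or_inf (ereal (of_int z))"
  unfolding int_or_inf_def by blast

lemma int_or_inf_add: "int_or_inf a \<Longrightarrow> int_or_inf b \<Longrightarrow> int_or_inf (a + b)"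
  by (auto simp: int_or_inf_def) (metis of_int_add plus_ereal.simps(1))

lemma int_or_inf_min: "int_or_inf a \<Longrightarrow> int_or_inf b \<Longrightarrow> int_or_inf (min a b)"
  by (simp add: min_def)

lemma int_or_inf_max: "int_or_inf a \<Longrightarrow> int_or_inf b \<Longrightarrow> int_or_inf (max a b)"
  by (simp add: max_def)

lemma int_or_inf_le_add_iff:
  "int_or_inf w \<Longrightarrow> ereal (of_int a) \<le> ereal (of_int b) + w \<longleftrightarrow> ereal (of_int (a - b)) \<le> w"
  by (cases rule: int_or_inf_cases) auto

lemma int_or_inf_less_iff:
  "int_or_inf v \<Longrightarrow> ereal (of_int z) < v \<longleftrightarrow> ereal (of_int (z + 1)) \<le> v"
  by (cases rule: int_or_inf_cases) auto

lemma int_or_inf_lessE: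
  assumes "int_or_inf v" "v < u"
  obtains z where "v = ereal (of_int z)"
  using assms by (cases rule: int_or_inf_cases) auto

lemma path_weight_ge_endpoints:
  assumes tri: "\<forall>i\<le>n. \<forall>j\<le>n. \<forall>k\<le>n. w i j \<le> w i k + w k j"
  shows "length ns \<ge> 2 \<Longrightarrow> \<forall>v\<in>set ns. v \<le> n \<Longrightarrow> w (hd ns) (last ns) \<le> path_weight w ns"
proof (induction ns rule: induct_list012)
  case (3 a b rest)
  show ?case
  proof (cases rest)
    case Nil
    then show ?thesis by simp
  next
    case Cons
    then have "w b (last rest) \<le> path_weight w (b # rest)"
      using 3 by auto
    moreover have "w a (last rest) \<le> w a b + w b (last rest)"
      using tri 3(4) Cons by simp
    ultimately show ?thesis
      using Cons by (simp add: add_left_mono order_trans)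
  qed
qed auto

text \<open>The cycle condition in consistency is implied by the triangle inequality.\<close>
lemma closed_graph_iff:
  "closed_graph n w \<longleftrightarrow> int_graph n w \<and> (\<forall>i\<le>n. w i i = 0) \<and>
     (\<forall>i\<le>n. \<forall>j\<le>n. \<forall>k\<le>n. w i j \<le> w i k + w k j)"
proof -
  have "path_weight w ns \<ge> 0"
    if diag: "\<forall>i\<le>n. w i i = 0" and tri: "\<forall>i\<le>n. \<forall>j\<le>n. \<forall>k\<le>n. w i j \<le> w i k + w k j"
      and cyc: "is_cycle n ns" for ns
  proof -
    have "ns \<noteq> []" using cyc unfolding is_cycle_def by auto
    then have "hd ns \<le> n" "last ns \<le> n" "hd ns = last ns"
      using cyc unfolding is_cycle_def by auto
    then show ?thesis
      using path_weight_ge_endpoints[OF tri] cyc diag unfolding is_cycle_def by force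
  qed
  then show ?thesis unfolding closed_graph_def consistent_def by blast
qed

lemma closed_graph_int_or_inf: "closed_graph n w \<Longrightarrow> i \<le> n \<Longrightarrow> j \<le> n \<Longrightarrow> int_or_inf (w i j)"
  unfolding closed_graph_iff int_graph_iff by blast

lemma closed_graph_diag: "closed_graph n w \<Longrightarrow> i \<le> n \<Longrightarrow> w i i = 0"
  unfolding closed_graph_iff by blast

lemma closed_graph_triangle:
  "closed_graph n w \<Longrightarrow> i \<le> n \<Longrightarrow> j \<le> n \<Longrightarrow> k \<le> n \<Longrightarrow> w i j \<le> w i k + w k j"
  unfolding closed_graph_iff by blast

definition point_graph :: "(nat \<Rightarrow> int) \<Rightarrow> graph" where
  "point_graph x p q = ereal (of_int (x p - x q))"

lemma closed_point_graph: "closed_graph n (point_graph x)"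
  unfolding closed_graph_iff int_graph_iff point_graph_def
  by (auto simp del: of_int_diff)

lemma mem_gamma_iff: "x \<in> gamma n w \<longleftrightarrow> x \<in> points n \<and> graph_le n (point_graph x) w"
  unfolding gamma_def graph_le_def point_graph_def by blast

lemma gamma_mono: "graph_le n w w' \<Longrightarrow> gamma n w \<subseteq> gamma n w'"
  unfolding gamma_def graph_le_def by (auto simp del: of_int_diff) (meson order_trans)

lemma graph_le_join: "graph_le n w1 (graph_join w1 w2)" "graph_le n w2 (graph_join w1 w2)"
  unfolding graph_le_def graph_join_def by auto

lemma closed_graph_join:
  assumes "closed_graph n w1" "closed_graph n w2"
  shows "closed_graph n (graph_join w1 w2)"
  unfolding closed_graph_iff int_graph_iff
proof (intro conjI allI impI)
  fix i j k assume ijk: "i \<le> n" "j \<le> n" "k \<le> n"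
  show "int_or_inf (graph_join w1 w2 i j)"
    unfolding graph_join_def using assms ijk by (simp add: int_or_inf_max closed_graph_int_or_inf)
  show "graph_join w1 w2 i i = 0"
    unfolding graph_join_def using assms ijk by (simp add: closed_graph_diag)
  have "w1 i k + w1 k j \<le> graph_join w1 w2 i k + graph_join w1 w2 k j"
    "w2 i k + w2 k j \<le> graph_join w1 w2 i k + graph_join w1 w2 k j"
    unfolding graph_join_def by (auto intro: add_mono)
  then show "graph_join w1 w2 i j \<le> graph_join w1 w2 i k + graph_join w1 w2 k j"
    unfolding graph_join_def
    using closed_graph_triangle[OF assms(1) ijk] closed_graph_triangle[OF assms(2) ijk]
    by (auto intro: order_trans)
qed

text \<open>The row minima of a closed graph form a potential, i.e. a point of the represented set.\<close>
lemma closed_graph_gamma_nonempty: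
  assumes closed: "closed_graph n w"
  shows "gamma n w \<noteq> {}"
proof -
  define f where "f k = Min (w k ` {..n})" for k
  have f_attained: "\<exists>m\<le>n. f k = w k m" for k
  proof -
    have "f k \<in> w k ` {..n}" unfolding f_def by (rule Min_in) auto
    then show ?thesis by auto
  qed
  have f_le: "f k \<le> w k l" if "l \<le> n" for k l
    unfolding f_def using that by auto
  have "\<exists>z. f k = ereal (of_int z)" if "k \<le> n" for k
  proof -
    obtain m where "m \<le> n" "f k = w k m" using f_attained by blast
    moreover have "f k \<le> 0" using f_le[of k k] closed_graph_diag[OF closed that] that by simp
    ultimately show ?thesis using closed_graph_int_or_inf[OF closed that \<open>m \<le> n\<close>]
      unfolding int_or_inf_def by force
  qed
  then obtain z where z: "\<And>k. k \<le> n \<Longrightarrow> f k = ereal (of_int (z k))" by metis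
  define x where "x k = (if k \<le> n then z k - z 0 else 0)" for k
  have "ereal (of_int (x p - x q)) \<le> w p q" if p: "p \<le> n" and q: "q \<le> n" for p q
  proof -
    obtain m where m: "m \<le> n" "f q = w q m" using f_attained by blast
    have "f p \<le> w p q + f q"
      using f_le[OF m(1), of p] closed_graph_triangle[OF closed p m(1) q] m(2) by (auto intro: order_trans)
    then have "ereal (of_int (z p)) \<le> ereal (of_int (z q)) + w p q"
      using z p q by (simp add: add.commute)
    then show ?thesis
      using p q int_or_inf_le_add_iff[OF closed_graph_int_or_inf[OF closed p q]] by (simp add: x_def)
  qed
  then have "x \<in> gamma n w" unfolding gamma_def points_def x_def by auto
  then show ?thesis by blast
qed

text \<open>Closure of \<open>w\<close> after adding the arc \<open>j \<rightarrow> i\<close> of weight \<open>-c\<close>, i.e. the constraint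
  \<open>c \<le> x\<^sub>i - x\<^sub>j\<close>: new shortest paths use that arc exactly once.\<close>
definition tighten :: "graph \<Rightarrow> nat \<Rightarrow> nat \<Rightarrow> int \<Rightarrow> graph" where
  "tighten w i j c p q = min (w p q) (w p j + ereal (of_int (- c)) + w i q)"

lemma graph_le_tighten: "graph_le n (tighten w i j c) w"
  unfolding graph_le_def tighten_def by simp

lemma gamma_tighten:
  assumes "i \<le> n" "j \<le> n" "w i i = 0" "w j j = 0"
  shows "gamma n (tighten w i j c) = {x \<in> gamma n w. c \<le> x i - x j}"
proof (intro set_eqI iffI)
  fix x assume x: "x \<in> gamma n (tighten w i j c)"
  then have "ereal (of_int (x j - x i)) \<le> tighten w i j c j i"
    using assms unfolding gamma_def by blast
  also have "\<dots> \<le> ereal (of_int (- c))"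
    using assms unfolding tighten_def by simp
  finally show "x \<in> {x \<in> gamma n w. c \<le> x i - x j}"
    using x gamma_mono[OF graph_le_tighten, of n w i j c] by auto
next
  fix x assume x: "x \<in> {x \<in> gamma n w. c \<le> x i - x j}"
  have "ereal (of_int (x p - x q)) \<le> w p j + ereal (of_int (- c)) + w i q"
    if p: "p \<le> n" and q: "q \<le> n" for p q
  proof -
    have "ereal (of_int (x p - x q)) \<le>
        ereal (of_int (x p - x j)) + ereal (of_int (- c)) + ereal (of_int (x i - x q))"
      using x by simp
    also have "\<dots> \<le> w p j + ereal (of_int (- c)) + w i q"
      using x p q assms unfolding gamma_def by (intro add_mono) auto
    finally show ?thesis .
  qed
  then show "x \<in> gamma n (tighten w i j c)"
    using x unfolding gamma_def tighten_def by auto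
qed

lemma min_add_min_cases:
  "min (a::ereal) b + min c d \<in> {a + c, a + d, b + c, b + d}"
  by (simp add: min_def)

lemma closed_graph_tighten:
  assumes closed: "closed_graph n w" and ij: "i \<le> n" "j \<le> n"
    and c: "ereal (of_int c) \<le> w i j"
  shows "closed_graph n (tighten w i j c)"
  unfolding closed_graph_iff int_graph_iff
proof (intro conjI allI impI)
  let ?C = "ereal (of_int (- c))"
  let ?A = "\<lambda>p q. w p j + ?C + w i q"
  have new_cycle_nonneg: "0 \<le> w i m + w m j + ?C" if "m \<le> n" for m
  proof -
    have "ereal (of_int c) \<le> w i m + w m j" using c closed_graph_triangle[OF closed ij(1) ij(2) that] by simp
    then show ?thesis by (cases "w i m + w m j") auto
  qed
  fix p q m assume p: "p \<le> n" and q: "q \<le> n" and m: "m \<le> n"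
  show "int_or_inf (tighten w i j c p q)"
    unfolding tighten_def
    by (intro int_or_inf_min int_or_inf_add int_or_inf_of_int closed_graph_int_or_inf[OF closed]) (use p q ij in auto)
  show "tighten w i j c p p = 0"
    unfolding tighten_def using closed_graph_diag[OF closed p] new_cycle_nonneg[OF p] by (simp add: ac_simps)
  let ?T = "min (w p q) (?A p q)"
  have "?T \<le> w p m + w m q"
    using closed_graph_triangle[OF closed p q m] by (simp add: min.coboundedI1)
  moreover have "?A p q \<le> w p m + ?A m q"
    using closed_graph_triangle[OF closed p ij(2) m] by (metis add_right_mono add.assoc)
  then have "?T \<le> w p m + ?A m q"
    by (simp add: min.coboundedI2)
  moreover have "?A p q \<le> ?A p m + w m q"
    using closed_graph_triangle[OF closed ij(1) q m] by (metis add_left_mono add.assoc)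
  then have "?T \<le> ?A p m + w m q"
    by (simp add: min.coboundedI2)
  moreover have "?A p q \<le> ?A p q + (w i m + w m j + ?C)"
    using new_cycle_nonneg[OF m] by (simp add: add_increasing2)
  then have "?T \<le> ?A p m + ?A m q"
    by (simp add: min.coboundedI2 ac_simps)
  ultimately show "tighten w i j c p q \<le> tighten w i j c p m + tighten w i j c m q"
    unfolding tighten_def using min_add_min_cases[of "w p m" "?A p m" "w m q" "?A m q"] by auto
qed

lemma closed_graph_attains:
  assumes closed: "closed_graph n w" and ij: "i \<le> n" "j \<le> n"
    and c: "ereal (of_int c) \<le> w i j"
  shows "\<exists>x\<in>gamma n w. c \<le> x i - x j"
  using closed_graph_gamma_nonempty[OF closed_graph_tighten[OF assms]]
    gamma_tighten[where w=w and c=c, OF ij closed_graph_diag[OF closed ij(1)] closed_graph_diag[OF closed ij(2)]]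
  by auto

lemma closed_graph_attains_pair:
  assumes closed: "closed_graph n w" and idx: "i \<le> n" "j \<le> n" "k \<le> n" "l \<le> n"
    and a: "ereal (of_int a) \<le> w i j" and b: "ereal (of_int b) \<le> w k l"
    and ab: "ereal (of_int (a + b)) \<le> w i l + w k j"
  shows "\<exists>x\<in>gamma n w. a \<le> x i - x j \<and> b \<le> x k - x l"
proof -
  define w' where "w' = tighten w i j a"
  have closed': "closed_graph n w'"
    unfolding w'_def using closed_graph_tighten[OF closed idx(1,2) a] .
  have "ereal (of_int b) \<le> (w i l + w k j) + ereal (of_int (- a))"
    using ab by (cases "w i l + w k j") auto
  then have "ereal (of_int b) \<le> w k j + ereal (of_int (- a)) + w i l"
    by (simp add: ac_simps)
  then have "ereal (of_int b) \<le> w' k l"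
    using b unfolding w'_def tighten_def by simp
  then obtain x where "x \<in> gamma n (tighten w' k l b)"
    using closed_graph_gamma_nonempty[OF closed_graph_tighten[OF closed' idx(3,4)]] by blast
  then show ?thesis
    using gamma_tighten[where w=w' and c=b, OF idx(3,4) closed_graph_diag[OF closed' idx(3)]
        closed_graph_diag[OF closed' idx(4)]]
      gamma_tighten[where w=w and c=a, OF idx(1,2) closed_graph_diag[OF closed idx(1)]
        closed_graph_diag[OF closed idx(2)]]
    unfolding w'_def by auto
qed

lemma gamma_in_BD_Z:
  assumes "int_graph n w"
  shows "gamma n w \<in> BD_Z n"
proof -
  define C where "C = {(i, j, b). i \<le> n \<and> j \<le> n \<and> w i j = ereal (of_int b)}"
  have "C \<subseteq> (\<lambda>(i, j). (i, j, \<lfloor>real_of_ereal (w i j)\<rfloor>)) ` ({..n} \<times> {..n})"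
    unfolding C_def by (force intro: image_eqI[of _ _ "(i, j)" for i j])
  then have "finite C" by (rule finite_subset) auto
  moreover have "gamma n w = {x \<in> points n. \<forall>(i, j, b)\<in>C. x i - x j \<le> b}"
  proof (intro set_eqI iffI)
    fix x assume "x \<in> gamma n w"
    then show "x \<in> {x \<in> points n. \<forall>(i, j, b)\<in>C. x i - x j \<le> b}"
      unfolding gamma_def C_def by fastforce
  next
    fix x assume x: "x \<in> {x \<in> points n. \<forall>(i, j, b)\<in>C. x i - x j \<le> b}"
    have "ereal (of_int (x i - x j)) \<le> w i j" if ij: "i \<le> n" "j \<le> n" for i j
    proof -
      have "int_or_inf (w i j)" using assms ij unfolding int_graph_iff by blast
      then show ?thesis
      proof (cases rule: int_or_inf_cases)
        case (finite z)
        then have "(i, j, z) \<in> C" using ij unfolding C_def by auto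
        then show ?thesis using x finite by auto
      qed simp
    qed
    then show "x \<in> gamma n w" using x unfolding gamma_def by auto
  qed
  ultimately show ?thesis
    unfolding BD_Z_def C_def by blast
qed

lemma join_attained:
  assumes "closed_graph n w1" "closed_graph n w2" "i \<le> n" "j \<le> n"
    and "ereal (of_int c) \<le> graph_join w1 w2 i j"
  shows "\<exists>y\<in>gamma n w1 \<union> gamma n w2. c \<le> y i - y j"
  using assms closed_graph_attains[of n w1 i j c] closed_graph_attains[of n w2 i j c]
  unfolding graph_join_def le_max_iff_disj by blast

lemma bd_hull_union_closed_graphs:
  assumes closed: "closed_graph n w1" "closed_graph n w2"
  shows "bd_hull_union n (gamma n w1) (gamma n w2) = gamma n (graph_join w1 w2)"
proof
  have "gamma n w1 \<union> gamma n w2 \<subseteq> gamma n (graph_join w1 w2)"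
    using gamma_mono[OF graph_le_join(1)] gamma_mono[OF graph_le_join(2)] by blast
  moreover have "int_graph n (graph_join w1 w2)"
    using closed_graph_join[OF closed] unfolding closed_graph_iff by blast
  ultimately show "bd_hull_union n (gamma n w1) (gamma n w2) \<subseteq> gamma n (graph_join w1 w2)"
    unfolding bd_hull_union_def using gamma_in_BD_Z by blast
next
  show "gamma n (graph_join w1 w2) \<subseteq> bd_hull_union n (gamma n w1) (gamma n w2)"
    unfolding bd_hull_union_def
  proof (intro Inter_greatest subsetI)
    fix S x assume S: "S \<in> {S \<in> BD_Z n. gamma n w1 \<union> gamma n w2 \<subseteq> S}"
      and x: "x \<in> gamma n (graph_join w1 w2)"
    then obtain C where C: "\<forall>(i, j, b)\<in>C. i \<le> n \<and> j \<le> n"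
      and S_eq: "S = {x \<in> points n. \<forall>(i, j, b)\<in>C. x i - x j \<le> b}"
      unfolding BD_Z_def by auto
    have "x i - x j \<le> b" if ijb: "(i, j, b) \<in> C" for i j b
    proof -
      have ij: "i \<le> n" "j \<le> n" using C ijb by auto
      then obtain y where "y \<in> gamma n w1 \<union> gamma n w2" "x i - x j \<le> y i - y j"
        using join_attained[OF closed ij] x unfolding gamma_def by blast
      then show ?thesis using S ijb unfolding S_eq by fastforce
    qed
    then show "x \<in> S" using x unfolding S_eq gamma_def by auto
  qed
qed

lemma violated_generating_arc:
  assumes sub: "subgraph n R G" and closure: "graph_eq n (graph_closure n R) G"
    and x: "x \<in> points n" "x \<notin> gamma n G"
  shows "\<exists>i j. is_arc n R i j \<and> G i j < ereal (of_int (x i - x j))"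
proof (rule ccontr)
  assume no_violation: "\<not> ?thesis"
  have "point_graph x p q \<le> R p q" if "p \<le> n" "q \<le> n" for p q
  proof (cases "is_arc n R p q")
    case True
    then show ?thesis
      using no_violation sub that unfolding subgraph_def point_graph_def by (metis not_le)
  next
    case False
    then show ?thesis using that unfolding is_arc_def by (simp add: top.not_eq_extremum)
  qed
  then have "graph_le n (point_graph x) R" unfolding graph_le_def by blast
  then have "point_graph x p q \<le> graph_closure n R p q" for p q
    unfolding graph_closure_def using closed_point_graph closed_graph_iff
    by (intro SUP_upper) auto
  then have "graph_le n (point_graph x) G"
    using closure unfolding graph_eq_def graph_le_def by metis
  then show False using x unfolding mem_gamma_iff by blast
qed

lemma violated_pair_conditions:
  assumes "int_graph n G1" "int_graph n G2" and x: "x \<in> gamma n (graph_join G1 G2)"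
    and ij: "i \<le> n" "j \<le> n" and kl: "k \<le> n" "l \<le> n"
    and v1: "G1 i j < ereal (of_int (x i - x j))" and v2: "G2 k l < ereal (of_int (x k - x l))"
  shows "G1 i j < G2 i j" and "G2 k l < G1 k l"
    and "G1 i j + G2 k l + 2 \<le> graph_join G1 G2 i l + graph_join G1 G2 k j"
proof -
  have xW: "ereal (of_int (x p - x q)) \<le> graph_join G1 G2 p q" if "p \<le> n" "q \<le> n" for p q
    using x that unfolding gamma_def by blast
  show "G1 i j < G2 i j"
    using order.strict_trans2[OF v1 xW[OF ij]] unfolding graph_join_def less_max_iff_disj by simp
  show "G2 k l < G1 k l"
    using order.strict_trans2[OF v2 xW[OF kl]] unfolding graph_join_def less_max_iff_disj by simp
  obtain g1 where g1: "G1 i j = ereal (of_int g1)"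
    using assms(1) ij v1 unfolding int_graph_iff by (metis int_or_inf_lessE)
  obtain g2 where g2: "G2 k l = ereal (of_int g2)"
    using assms(2) kl v2 unfolding int_graph_iff by (metis int_or_inf_lessE)
  have "g1 < x i - x j" "g2 < x k - x l"
    using v1 v2 g1 g2 by (simp_all del: of_int_diff)
  then have "g1 + g2 + 2 \<le> (x i - x l) + (x k - x j)"
    by linarith
  then have "G1 i j + G2 k l + 2 \<le> ereal (of_int (x i - x l)) + ereal (of_int (x k - x j))"
    using g1 g2 by (simp del: of_int_diff)
  also have "\<dots> \<le> graph_join G1 G2 i l + graph_join G1 G2 k j"
    using ij kl by (intro add_mono xW)
  finally show "G1 i j + G2 k l + 2 \<le> graph_join G1 G2 i l + graph_join G1 G2 k j" .
qed

lemma separating_point_of_arc_pair: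
  assumes closed: "closed_graph n G1" "closed_graph n G2"
    and ij: "i \<le> n" "j \<le> n" and kl: "k \<le> n" "l \<le> n"
    and c1: "G1 i j < G2 i j" and c2: "G2 k l < G1 k l"
    and c3: "G1 i j + G2 k l + 2 \<le> graph_join G1 G2 i l + graph_join G1 G2 k j"
  shows "\<exists>x\<in>gamma n (graph_join G1 G2).
    G1 i j < ereal (of_int (x i - x j)) \<and> G2 k l < ereal (of_int (x k - x l))"
proof -
  obtain g1 where g1: "G1 i j = ereal (of_int g1)"
    using closed_graph_int_or_inf[OF closed(1) ij] c1 by (rule int_or_inf_lessE)
  obtain g2 where g2: "G2 k l = ereal (of_int g2)"
    using closed_graph_int_or_inf[OF closed(2) kl] c2 by (rule int_or_inf_lessE)
  have "ereal (of_int (g1 + 1)) \<le> graph_join G1 G2 i j"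
    using c1 g1 int_or_inf_less_iff[OF closed_graph_int_or_inf[OF closed(2) ij]]
    unfolding graph_join_def by (simp add: le_max_iff_disj)
  moreover have "ereal (of_int (g2 + 1)) \<le> graph_join G1 G2 k l"
    using c2 g2 int_or_inf_less_iff[OF closed_graph_int_or_inf[OF closed(1) kl]]
    unfolding graph_join_def by (simp add: le_max_iff_disj)
  moreover have "ereal (of_int (g1 + 1 + (g2 + 1))) \<le> graph_join G1 G2 i l + graph_join G1 G2 k j"
    using c3 g1 g2 by (simp add: ac_simps)
  ultimately obtain x where x: "x \<in> gamma n (graph_join G1 G2)"
      and "g1 + 1 \<le> x i - x j" "g2 + 1 \<le> x k - x l"
    using closed_graph_attains_pair[OF closed_graph_join[OF closed] ij kl] by blast
  then have "G1 i j < ereal (of_int (x i - x j)) \<and> G2 k l < ereal (of_int (x k - x l))"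
    using g1 g2 by (simp del: of_int_diff)
  with x show ?thesis by blast
qed

lemma violated_not_in_gamma:
  "G i j < ereal (of_int (x i - x j)) \<Longrightarrow> i \<le> n \<Longrightarrow> j \<le> n \<Longrightarrow> x \<notin> gamma n G"
  unfolding gamma_def by (auto simp del: of_int_diff dest: leD)

lemma join_point_outside_both_iff:
  assumes closed: "closed_graph n G1" "closed_graph n G2"
    and sub: "subgraph n R1 G1" "subgraph n R2 G2"
    and closure: "graph_eq n (graph_closure n R1) G1" "graph_eq n (graph_closure n R2) G2"
  shows "(\<exists>x\<in>gamma n (graph_join G1 G2). x \<notin> gamma n G1 \<and> x \<notin> gamma n G2) \<longleftrightarrow>
    (\<exists>i j k l. is_arc n R1 i j \<and> is_arc n R2 k l \<and>
       G1 i j < G2 i j \<and> G2 k l < G1 k l \<and>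
       G1 i j + G2 k l + 2 \<le> graph_join G1 G2 i l + graph_join G1 G2 k j)"
    (is "?point \<longleftrightarrow> ?arcs")
proof
  assume ?point
  then obtain x where x: "x \<in> gamma n (graph_join G1 G2)" "x \<notin> gamma n G1" "x \<notin> gamma n G2"
    by blast
  then have "x \<in> points n" unfolding gamma_def by blast
  then obtain i j k l where arcs: "is_arc n R1 i j" "is_arc n R2 k l"
    and v1: "G1 i j < ereal (of_int (x i - x j))" and v2: "G2 k l < ereal (of_int (x k - x l))"
    using violated_generating_arc[OF sub(1) closure(1)] violated_generating_arc[OF sub(2) closure(2)] x
    by metis
  have int: "int_graph n G1" "int_graph n G2"
    using closed unfolding closed_graph_iff by blast+
  show ?arcs
    using arcs violated_pair_conditions[OF int x(1) _ _ _ _ v1 v2] unfolding is_arc_def by blast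
next
  assume ?arcs
  then obtain i j k l where arcs: "is_arc n R1 i j" "is_arc n R2 k l"
    and conds: "G1 i j < G2 i j" "G2 k l < G1 k l"
      "G1 i j + G2 k l + 2 \<le> graph_join G1 G2 i l + graph_join G1 G2 k j"
    by blast
  have idx: "i \<le> n" "j \<le> n" "k \<le> n" "l \<le> n" using arcs unfolding is_arc_def by auto
  show ?point
    using separating_point_of_arc_pair[OF closed idx conds] violated_not_in_gamma idx by metis
qed

text \<open>Only closedness of the \<open>G\<^sub>h\<close>, their representation of \<open>bd\<^sub>h\<close> and the generator
  hypotheses on \<open>R\<^sub>h\<close> are used; the remaining hypotheses are consequences or irrelevant.\<close>

theorem theorem7:
  fixes n :: nat and G1 G2 R1 R2 :: graph and bd1 bd2 :: "(nat \<Rightarrow> int) set"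
  assumes "bd1 \<in> BD_Z n" and "bd2 \<in> BD_Z n"
    and "bd1 \<noteq> {}" and "bd2 \<noteq> {}"
    and "int_graph n G1" and "int_graph n G2"
    and "closed_graph n G1" and "closed_graph n G2"
    and "bd1 = gamma n G1" and "bd2 = gamma n G2"
    and "int_graph n R1" and "int_graph n R2"
    and "subgraph n R1 G1" and "subgraph n R2 G2"
    and "graph_eq n (graph_closure n R1) G1" and "graph_eq n (graph_closure n R2) G2"
  shows "bd_hull_union n bd1 bd2 \<noteq> bd1 \<union> bd2 \<longleftrightarrow>
    (\<exists>i j k l. is_arc n R1 i j \<and> is_arc n R2 k l \<and>
       G1 i j < G2 i j \<and> G2 k l < G1 k l \<and>
       G1 i j + G2 k l + 2 \<le> graph_join G1 G2 i l + graph_join G1 G2 k j)"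
proof -
  have "bd1 \<union> bd2 \<subseteq> gamma n (graph_join G1 G2)"
    using gamma_mono[OF graph_le_join(1)] gamma_mono[OF graph_le_join(2)] assms(9,10) by blast
  moreover have "bd_hull_union n bd1 bd2 = gamma n (graph_join G1 G2)"
    using bd_hull_union_closed_graphs[OF assms(7,8)] assms(9,10) by simp
  ultimately have "bd_hull_union n bd1 bd2 \<noteq> bd1 \<union> bd2 \<longleftrightarrow>
      (\<exists>x\<in>gamma n (graph_join G1 G2). x \<notin> gamma n G1 \<and> x \<notin> gamma n G2)"
    using assms(9,10) by blast
  with join_point_outside_both_iff[OF assms(7,8,13,14,15,16)] show ?thesis by simp
qed

end
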